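(* Let $W=V\epsilon\sim\hat N(0,[\underline\sigma^2,\overline\sigma^2])$ and $\bar W=\bar V\bar\epsilon$ with $\bar W\overset d=W$ (so $\bar V\sim\mathcal M[\underline\sigma,\overline\sigma]$, $\bar\epsilon\sim N(0,1)$), and suppose $W$ and $\bar W$ are semi-sequentially independent, i.e. $V\dashrightarrow\bar V\dashrightarrow\epsilon\dashrightarrow\bar\epsilon$. Then $W+\bar W\overset d=\sqrt2\,W$.
   Context: Sublinear expectation space $(\Omega,\mathcal H,\hat{\mathbb E})$, $\hat{\mathbb E}[X]=\sup_{Q\in\mathcal P}E_Q[X]$. $C_{b,Lip}$: bounded Lipschitz; $C_{l.Lip}$: $|\varphi(x)-\varphi(y)|\le C(1+|x|^k+|y|^k)|x-y|$. $X\overset d=Y$ means $\hat{\mathbb E}[\varphi(X)]=\hat{\mathbb E}[\varphi(Y)]$ for all $\varphi\in C_{b,Lip}$. $X\dashrightarrow Y$ means $\hat{\mathbb E}[\varphi(X,Y)]=\hat{\mathbb E}[\hat{\mathbb E}[\varphi(x,Y)]_{x=X}]$ for all $\varphi\in C_{b,Lip}$; chains $X_1\dashrightarrow\cdots\dashrightarrow X_n$ mean $(X_1,\dots,X_i)\dashrightarrow X_{i+1}$ for each $i$. $V\sim\mathcal M[\underline\sigma,\overline\sigma]$: $\hat{\mathbb E}[\varphi(V)]=\max_{v\in[\underline\sigma,\overline\sigma]}\varphi(v)$ for $\varphi\in C_{l.Lip}$. $\epsilon\sim N(0,1)$: $\hat{\mathbb E}[\varphi(\epsilon)]=E[\varphi(Z)]$,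 $Z$ classical standard normal. Semi-$G$-normal $W\sim\hat N(0,[\underline\sigma^2,\overline\sigma^2])$: $W=V\epsilon$ with $V\sim\mathcal M[\underline\sigma,\overline\sigma]$, $\epsilon\sim N(0,1)$, $V\dashrightarrow\epsilon$. *)

theory Defs
  imports "HOL-Probability.Probability"
begin

text \<open>Sublinear expectation space given through its representation
  \<open>E[X] = sup_{Q in P} E_Q[X]\<close>: \<open>P\<close> is a nonempty family of probability measures
  on a common measurable space \<open>M\<close> (same space and same sigma-algebra).\<close>

definition sublin_space :: "'w measure \<Rightarrow> 'w measure set \<Rightarrow> bool" where
  "sublin_space M P \<longleftrightarrow> P \<noteq> {} \<and>
     (\<forall>Q\<in>P. prob_space Q \<and> sets Q = sets M)"

definition sup_exp :: "'w measure set \<Rightarrow> ('w \<Rightarrow> real) \<Rightarrow> real" where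
  "sup_exp P X = (SUP Q\<in>P. integral\<^sup>L Q X)"

definition C_bLip :: "('a::euclidean_space \<Rightarrow> real) \<Rightarrow> bool" where
  "C_bLip \<phi> \<longleftrightarrow> bounded (range \<phi>) \<and> (\<exists>L. \<forall>x y. \<bar>\<phi> x - \<phi> y\<bar> \<le> L * dist x y)"

definition C_lLip :: "('a::euclidean_space \<Rightarrow> real) \<Rightarrow> bool" where
  "C_lLip \<phi> \<longleftrightarrow> (\<exists>C (k::nat). \<forall>x y.
      \<bar>\<phi> x - \<phi> y\<bar> \<le> C * (1 + norm x ^ k + norm y ^ k) * norm (x - y))"

definition same_distr :: "'w measure set \<Rightarrow> ('w \<Rightarrow> 'a::euclidean_space) \<Rightarrow> ('w \<Rightarrow> 'a) \<Rightarrow> bool" where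
  "same_distr P X Y \<longleftrightarrow>
     (\<forall>\<phi>::'a \<Rightarrow> real. C_bLip \<phi> \<longrightarrow> sup_exp P (\<lambda>w. \<phi> (X w)) = sup_exp P (\<lambda>w. \<phi> (Y w)))"

definition seq_indep :: "'w measure set \<Rightarrow> ('w \<Rightarrow> 'a::euclidean_space) \<Rightarrow> ('w \<Rightarrow> 'b::euclidean_space) \<Rightarrow> bool" where
  "seq_indep P X Y \<longleftrightarrow>
     (\<forall>\<phi>::('a \<times> 'b) \<Rightarrow> real. C_bLip \<phi> \<longrightarrow>
        sup_exp P (\<lambda>w. \<phi> (X w, Y w)) =
        sup_exp P (\<lambda>w. sup_exp P (\<lambda>w'. \<phi> (X w, Y w'))))"

text \<open>\<open>V \<sim> M[a,b]\<close> (maximal distribution); \<open>\<phi>(V)\<close> is required to belong to the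
  space of random variables, i.e. to be integrable under every \<open>Q \<in> P\<close>.\<close>
definition maximal_distr :: "'w measure set \<Rightarrow> ('w \<Rightarrow> real) \<Rightarrow> real \<Rightarrow> real \<Rightarrow> bool" where
  "maximal_distr P V a b \<longleftrightarrow>
     (\<forall>\<phi>::real \<Rightarrow> real. C_lLip \<phi> \<longrightarrow>
        (\<forall>Q\<in>P. integrable Q (\<lambda>w. \<phi> (V w))) \<and>
        sup_exp P (\<lambda>w. \<phi> (V w)) = (SUP v\<in>{a..b}. \<phi> v))"

definition std_normal_distr :: "'w measure set \<Rightarrow> ('w \<Rightarrow> real) \<Rightarrow> bool" where
  "std_normal_distr P e \<longleftrightarrow>
     (\<forall>\<phi>::real \<Rightarrow> real. C_lLip \<phi> \<longrightarrow>
        (\<forall>Q\<in>P. integrable Q (\<lambda>w. \<phi> (e w))) \<and>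
        sup_exp P (\<lambda>w. \<phi> (e w)) = (LINT z|lborel. std_normal_density z * \<phi> z))"

end

theory Submission
  imports Defs
begin

(*
  Clamp V, Vb to [sl, su] and truncate the normal factors e, eb at level n. Then every integrand is
  bounded Lipschitz, so the chain of sequential independences lets one evaluate the sublinear
  expectation one variable at a time: up to an error O(1/n), E[phi(V e + Vb eb)] is the maximum over
  x, y in [sl, su] of E phi(x Z + y Z') with Z, Z' independent standard normal. The truncation error is
  controlled by the second moment of e, which is at most 1 under every Q in P. Since x Z + y Z' has the
  law of sqrt (x^2 + y^2) Z and sqrt ((x^2 + y^2) / 2) again ranges over [sl, su], the maximum equals the
  maximum over x of E phi(sqrt 2 x Z), which the same argument identifies with E[phi(sqrt 2 V e)].
*)

lemma Sup_eq_if_not_bdd_above: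
  fixes S T :: "real set"
  assumes "\<not> bdd_above S" "\<not> bdd_above T"
  shows "Sup S = Sup T"
proof -
  have "(\<lambda>z. \<forall>x\<in>S. x \<le> z) = (\<lambda>z. \<forall>x\<in>T. x \<le> z)"
    using assms unfolding bdd_above_def by (intro ext) (meson order.trans linear)
  then show ?thesis unfolding Sup_real_def by simp
qed

lemma abs_SUP_le:
  fixes f :: "'a \<Rightarrow> real"
  assumes "A \<noteq> {}" "\<And>y. y \<in> A \<Longrightarrow> \<bar>f y\<bar> \<le> B"
  shows "\<bar>SUP y\<in>A. f y\<bar> \<le> B"
proof -
  obtain y where y: "y \<in> A" using assms(1) by auto
  have "bdd_above (f ` A)" using assms(2) by (auto simp: bdd_above_def abs_le_iff)
  then have "f y \<le> (SUP y\<in>A. f y)" by (rule cSUP_upper[OF y])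
  moreover have "(SUP y\<in>A. f y) \<le> B" using assms by (intro cSUP_least) (auto simp: abs_le_iff)
  ultimately show ?thesis using assms(2)[OF y] by (auto simp: abs_le_iff)
qed

lemma abs_SUP_diff_le:
  fixes f g :: "'a \<Rightarrow> real"
  assumes A: "A \<noteq> {}" and f: "\<And>y. y \<in> A \<Longrightarrow> \<bar>f y\<bar> \<le> B" and g: "\<And>y. y \<in> A \<Longrightarrow> \<bar>g y\<bar> \<le> B"
    and d: "\<And>y. y \<in> A \<Longrightarrow> \<bar>f y - g y\<bar> \<le> d"
  shows "\<bar>(SUP y\<in>A. f y) - (SUP y\<in>A. g y)\<bar> \<le> d"
proof -
  have "bdd_above (f ` A)" "bdd_above (g ` A)"
    using f g by (auto simp: bdd_above_def abs_le_iff)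
  then have fS: "f y \<le> (SUP y\<in>A. f y)" and gS: "g y \<le> (SUP y\<in>A. g y)" if "y \<in> A" for y
    using that by (auto intro: cSUP_upper)
  have "(SUP y\<in>A. f y) \<le> (SUP y\<in>A. g y) + d"
  proof (rule cSUP_least[OF A])
    show "f y \<le> (SUP y\<in>A. g y) + d" if "y \<in> A" for y using gS[OF that] d[OF that] by linarith
  qed
  moreover have "(SUP y\<in>A. g y) \<le> (SUP y\<in>A. f y) + d"
  proof (rule cSUP_least[OF A])
    show "g y \<le> (SUP y\<in>A. f y) + d" if "y \<in> A" for y using fS[OF that] d[OF that] by linarith
  qed
  ultimately show ?thesis by linarith
qed

lemma eq_if_abs_diff_le_divide:
  fixes x y K :: real
  assumes "\<And>n. 0 < n \<Longrightarrow> \<bar>x - y\<bar> \<le> K / n"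
  shows "x = y"
proof (rule ccontr)
  assume "x \<noteq> y"
  then have d: "0 < \<bar>x - y\<bar>" by simp
  define n where "n = 2 * (\<bar>K\<bar> + 1) / \<bar>x - y\<bar>"
  have n: "0 < n" using d unfolding n_def by (simp add: add_pos_nonneg)
  have "K / n \<le> \<bar>K\<bar> / n" using n by (simp add: divide_right_mono)
  also have "\<dots> = \<bar>K\<bar> * \<bar>x - y\<bar> / (2 * (\<bar>K\<bar> + 1))" using d unfolding n_def by simp
  also have "\<dots> < \<bar>x - y\<bar>"
  proof -
    have "\<bar>K\<bar> * \<bar>x - y\<bar> < (2 * (\<bar>K\<bar> + 1)) * \<bar>x - y\<bar>"
      using d by (intro mult_strict_right_mono) auto
    then show ?thesis by (simp add: pos_divide_less_eq add_pos_nonneg mult.commute)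
  qed
  finally show False using assms[OF n] by linarith
qed

text \<open>The root mean square of two points of \<open>[a, b]\<close> lies again in \<open>[a, b]\<close>.\<close>
lemma SUP_SUP_sqrt_sum_squares:
  fixes g :: "real \<Rightarrow> real"
  assumes ab: "0 \<le> a" "a \<le> b" and B: "\<And>s. \<bar>g s\<bar> \<le> B"
  shows "(SUP x\<in>{a..b}. SUP y\<in>{a..b}. g (sqrt (x\<^sup>2 + y\<^sup>2))) = (SUP x\<in>{a..b}. g (sqrt 2 * x))"
proof -
  have I: "{a..b} \<noteq> {}" using ab by simp
  have bdd: "bdd_above ((\<lambda>y. g (sqrt (x\<^sup>2 + y\<^sup>2))) ` {a..b})" for x
    using B by (auto simp: bdd_above_def abs_le_iff intro!: exI[of _ B])
  have bdd2: "bdd_above ((\<lambda>x. SUP y\<in>{a..b}. g (sqrt (x\<^sup>2 + y\<^sup>2))) ` {a..b})"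
    using abs_SUP_le[OF I B] by (auto simp: bdd_above_def abs_le_iff intro!: exI[of _ B])
  have bdd3: "bdd_above ((\<lambda>x. g (sqrt 2 * x)) ` {a..b})"
    using B by (auto simp: bdd_above_def abs_le_iff intro!: exI[of _ B])
  show ?thesis
  proof (rule antisym)
    show "(SUP x\<in>{a..b}. SUP y\<in>{a..b}. g (sqrt (x\<^sup>2 + y\<^sup>2))) \<le> (SUP x\<in>{a..b}. g (sqrt 2 * x))"
    proof (intro cSUP_least I)
      fix x y assume x: "x \<in> {a..b}" and y: "y \<in> {a..b}"
      define s where "s = sqrt ((x\<^sup>2 + y\<^sup>2) / 2)"
      have "a\<^sup>2 \<le> x\<^sup>2" "x\<^sup>2 \<le> b\<^sup>2" "a\<^sup>2 \<le> y\<^sup>2" "y\<^sup>2 \<le> b\<^sup>2"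
        using x y ab by (auto intro: power_mono)
      then have "a \<le> s" "s \<le> b"
        unfolding s_def using ab by (auto intro!: real_le_rsqrt real_le_lsqrt)
      then have s: "s \<in> {a..b}" by simp
      have "sqrt (x\<^sup>2 + y\<^sup>2) = sqrt 2 * s"
        unfolding s_def by (simp add: real_sqrt_mult[symmetric])
      then show "g (sqrt (x\<^sup>2 + y\<^sup>2)) \<le> (SUP x\<in>{a..b}. g (sqrt 2 * x))"
        using cSUP_upper[OF s bdd3] by simp
    qed
    show "(SUP x\<in>{a..b}. g (sqrt 2 * x)) \<le> (SUP x\<in>{a..b}. SUP y\<in>{a..b}. g (sqrt (x\<^sup>2 + y\<^sup>2)))"
    proof (rule cSUP_mono[OF I bdd2])
      fix x assume x: "x \<in> {a..b}"
      have "sqrt (x\<^sup>2 + x\<^sup>2) = sqrt 2 * x"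
        using x ab by (simp add: real_sqrt_mult)
      then have "g (sqrt 2 * x) \<le> (SUP y\<in>{a..b}. g (sqrt (x\<^sup>2 + y\<^sup>2)))"
        using cSUP_upper[OF x bdd[of x]] by simp
      then show "\<exists>x'\<in>{a..b}. g (sqrt 2 * x) \<le> (SUP y\<in>{a..b}. g (sqrt (x'\<^sup>2 + y\<^sup>2)))"
        using x by blast
    qed
  qed
qed

lemma lipschitz_on_borel_measurable:
  fixes f :: "'a::euclidean_space \<Rightarrow> 'b::euclidean_space"
  assumes "L-lipschitz_on UNIV f"
  shows "f \<in> borel_measurable borel"
  using assms by (intro borel_measurable_continuous_onI lipschitz_on_continuous_on)

lemma lipschitz_on_fst_comp: "C-lipschitz_on U f \<Longrightarrow> C-lipschitz_on U (\<lambda>x. fst (f x))"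
  unfolding lipschitz_on_def by (meson dist_fst_le order_trans)

lemma lipschitz_on_snd_comp: "C-lipschitz_on U f \<Longrightarrow> C-lipschitz_on U (\<lambda>x. snd (f x))"
  unfolding lipschitz_on_def by (meson dist_snd_le order_trans)

lemma lipschitz_on_Pair_left: "1-lipschitz_on U (\<lambda>x. (x, c))"
  using lipschitz_on_Pair[OF lipschitz_on_id lipschitz_on_constant] by simp

lemma lipschitz_on_Pair_right: "1-lipschitz_on U (\<lambda>y. (c, y))"
  using lipschitz_on_Pair[OF lipschitz_on_constant lipschitz_on_id] by simp

lemma lipschitz_on_mult_bounded:
  fixes f g :: "'a::metric_space \<Rightarrow> real"
  assumes f: "C-lipschitz_on U f" "\<And>x. \<bar>f x\<bar> \<le> A"
    and g: "D-lipschitz_on U g" "\<And>x. \<bar>g x\<bar> \<le> B"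
  shows "(A * D + B * C)-lipschitz_on U (\<lambda>x. f x * g x)"
proof -
  have nonneg: "0 \<le> A" "0 \<le> B" using f(2) g(2) by (meson abs_ge_zero order_trans)+
  show ?thesis
  proof (rule lipschitz_onI)
    fix x y assume xy: "x \<in> U" "y \<in> U"
    have "f x * g x - f y * g y = f x * (g x - g y) + g y * (f x - f y)" by algebra
    then have "dist (f x * g x) (f y * g y) \<le> \<bar>f x\<bar> * dist (g x) (g y) + \<bar>g y\<bar> * dist (f x) (f y)"
      by (simp add: dist_real_def abs_mult[symmetric] abs_triangle_ineq)
    also have "\<dots> \<le> A * (D * dist x y) + B * (C * dist x y)"
      using f g xy nonneg by (intro add_mono mult_mono lipschitz_onD) (auto intro: lipschitz_on_nonneg)
    finally show "dist (f x * g x) (f y * g y) \<le> (A * D + B * C) * dist x y"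
      by (simp add: algebra_simps)
  next
    show "0 \<le> A * D + B * C"
      using nonneg lipschitz_on_nonneg[OF f(1)] lipschitz_on_nonneg[OF g(1)] by simp
  qed
qed

lemma clamp_real: "(a::real) \<le> b \<Longrightarrow> clamp a b x = max a (min b x)"
  unfolding clamp_def Basis_real_def by auto

lemma clamp_eq_self: "(x::real) \<in> {a..b} \<Longrightarrow> clamp a b x = x"
  using clamp_real[of a b x] by auto

lemma abs_clamp_le: "0 \<le> a \<Longrightarrow> (a::real) \<le> b \<Longrightarrow> \<bar>clamp a b x\<bar> \<le> b"
  by (simp add: clamp_real)

lemma abs_clamp_sym_le: "0 \<le> n \<Longrightarrow> \<bar>clamp (-n) n (z::real)\<bar> \<le> n"
  by (simp add: clamp_real)

lemma lipschitz_on_clamp_comp: "C-lipschitz_on U f \<Longrightarrow> C-lipschitz_on U (\<lambda>x. clamp a b (f x))"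
  unfolding lipschitz_on_def by (meson dist_clamps_le_dist_args order_trans)

lemma clamp_borel_measurable [measurable]: "clamp a b \<in> borel_measurable borel"
  by (rule lipschitz_on_borel_measurable[OF lipschitz_on_clamp_comp[OF lipschitz_on_id]])

lemma abs_clamp_sym_diff_le:
  fixes n z :: real
  assumes n: "0 < n"
  shows "\<bar>clamp (-n) n z - z\<bar> \<le> z\<^sup>2 / n"
proof (cases "\<bar>z\<bar> \<le> n")
  case True
  then have "clamp (-n) n z = z" by (intro clamp_eq_self) auto
  then show ?thesis using n by simp
next
  case False
  then have "\<bar>clamp (-n) n z - z\<bar> = \<bar>z\<bar> - n" using n by (auto simp: clamp_real)
  also have "\<dots> \<le> \<bar>z\<bar>" using n by simp
  also have "\<dots> \<le> \<bar>z\<bar> * \<bar>z\<bar> / n"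
  proof -
    have "\<bar>z\<bar> * n \<le> \<bar>z\<bar> * \<bar>z\<bar>" using False by (intro mult_left_mono) auto
    then show ?thesis using n by (simp add: field_simps)
  qed
  finally show ?thesis by (simp add: power2_eq_square abs_mult[symmetric])
qed

lemma (in prob_space) abs_integral_le_const:
  fixes f :: "'a \<Rightarrow> real"
  assumes bound: "\<And>w. \<bar>f w\<bar> \<le> B"
  shows "\<bar>integral\<^sup>L M f\<bar> \<le> B"
proof (cases "integrable M f")
  case True
  then have "integral\<^sup>L M (\<lambda>w. \<bar>f w\<bar>) \<le> B"
    using bound by (intro integral_le_const) auto
  then show ?thesis using integral_abs_bound[of M f] by linarith
next
  case False
  then show ?thesis using bound[of undefined] by (simp add: not_integrable_integral_eq)
qed

lemma (in prob_space) abs_integral_diff_le_integral: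
  fixes f g h :: "'a \<Rightarrow> real"
  assumes "integrable M f" "integrable M g" "integrable M h"
    and "AE w in M. \<bar>f w - g w\<bar> \<le> h w"
  shows "\<bar>integral\<^sup>L M f - integral\<^sup>L M g\<bar> \<le> integral\<^sup>L M h"
proof -
  have "\<bar>integral\<^sup>L M f - integral\<^sup>L M g\<bar> = \<bar>integral\<^sup>L M (\<lambda>w. f w - g w)\<bar>"
    using assms by simp
  also have "\<dots> \<le> integral\<^sup>L M (\<lambda>w. \<bar>f w - g w\<bar>)"
    by (rule integral_abs_bound)
  also have "\<dots> \<le> integral\<^sup>L M h"
    using assms by (intro integral_mono_AE) auto
  finally show ?thesis .
qed

lemma (in prob_space) lipschitz_on_integral:
  fixes f :: "'b::metric_space \<Rightarrow> 'a \<Rightarrow> real"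
  assumes lip: "\<And>u. u \<in> space M \<Longrightarrow> L-lipschitz_on S (\<lambda>x. f x u)"
    and int: "\<And>x. x \<in> S \<Longrightarrow> integrable M (f x)" and "0 \<le> L"
  shows "L-lipschitz_on S (\<lambda>x. \<integral>u. f x u \<partial>M)"
proof (rule lipschitz_onI)
  fix x y assume xy: "x \<in> S" "y \<in> S"
  have "\<bar>f x u - f y u\<bar> \<le> L * dist x y" if "u \<in> space M" for u
    using lipschitz_onD[OF lip[OF that] xy] by (simp add: dist_real_def)
  then have "\<bar>integral\<^sup>L M (f x) - integral\<^sup>L M (f y)\<bar> \<le> integral\<^sup>L M (\<lambda>_. L * dist x y)"
    using xy int by (intro abs_integral_diff_le_integral AE_I2) auto
  then show "dist (integral\<^sup>L M (f x)) (integral\<^sup>L M (f y)) \<le> L * dist x y"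
    by (simp add: dist_real_def prob_space)
qed fact

lemma (in prob_space) abs_integral_clamp_diff_le:
  fixes \<phi> :: "real \<Rightarrow> real"
  assumes \<phi>: "L-lipschitz_on UNIV \<phi>" "\<And>x. \<bar>\<phi> x\<bar> \<le> B"
    and [measurable]: "f \<in> borel_measurable M" "c \<in> borel_measurable M" "e \<in> borel_measurable M"
    and c: "\<And>w. \<bar>c w\<bar> \<le> C" and e: "integrable M (\<lambda>w. (e w)\<^sup>2)" and n: "0 < n"
  shows "\<bar>(\<integral>w. \<phi> (f w + c w * clamp (-n) n (e w)) \<partial>M) - (\<integral>w. \<phi> (f w + c w * e w) \<partial>M)\<bar>
    \<le> L * C / n * (\<integral>w. (e w)\<^sup>2 \<partial>M)"
proof -
  have \<phi>_meas [measurable]: "\<phi> \<in> borel_measurable borel"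
    by (rule lipschitz_on_borel_measurable[OF \<phi>(1)])
  have C_nonneg: "0 \<le> C" using c by (meson abs_ge_zero order_trans)
  have pointwise: "\<bar>\<phi> (f w + c w * clamp (-n) n (e w)) - \<phi> (f w + c w * e w)\<bar> \<le> L * C / n * (e w)\<^sup>2"
    for w
  proof -
    have "\<bar>\<phi> (f w + c w * clamp (-n) n (e w)) - \<phi> (f w + c w * e w)\<bar>
        \<le> L * (\<bar>c w\<bar> * \<bar>clamp (-n) n (e w) - e w\<bar>)"
      using lipschitz_onD[OF \<phi>(1), of "f w + c w * clamp (-n) n (e w)" "f w + c w * e w"]
      by (simp add: dist_real_def abs_mult[symmetric] right_diff_distrib)
    also have "\<dots> \<le> L * (C * ((e w)\<^sup>2 / n))"
      using c C_nonneg abs_clamp_sym_diff_le[OF n] lipschitz_on_nonneg[OF \<phi>(1)]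
      by (intro mult_left_mono mult_mono) auto
    finally show ?thesis by simp
  qed
  have "\<bar>(\<integral>w. \<phi> (f w + c w * clamp (-n) n (e w)) \<partial>M) - (\<integral>w. \<phi> (f w + c w * e w) \<partial>M)\<bar>
      \<le> (\<integral>w. L * C / n * (e w)\<^sup>2 \<partial>M)"
  proof (rule abs_integral_diff_le_integral)
    show "integrable M (\<lambda>w. \<phi> (f w + c w * clamp (-n) n (e w)))" "integrable M (\<lambda>w. \<phi> (f w + c w * e w))"
      using \<phi>(2) by (auto intro!: integrable_const_bound[where B = B])
  qed (use e pointwise in auto)
  then show ?thesis by simp
qed

section \<open>The standard normal distribution\<close>

definition std_normal :: "real measure" where
  "std_normal = density lborel std_normal_density"

lemma prob_space_std_normal: "prob_space std_normal"
  unfolding std_normal_def by (rule prob_space_normal_density) simp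

lemma sets_std_normal [simp, measurable_cong]: "sets std_normal = sets borel"
  unfolding std_normal_def by simp

lemma integral_std_normal:
  "g \<in> borel_measurable borel \<Longrightarrow> integral\<^sup>L std_normal g = (\<integral>z. std_normal_density z * g z \<partial>lborel)"
  unfolding std_normal_def by (subst integral_density) auto

lemma integrable_std_normal_square: "integrable std_normal (\<lambda>z. z\<^sup>2)"
  unfolding std_normal_def
  by (subst integrable_density) (auto simp: integrable_std_normal_moment)

lemma integral_std_normal_square: "integral\<^sup>L std_normal (\<lambda>z. z\<^sup>2) = 1"
  using integral_std_normal_moment_even[of 1] by (simp add: integral_std_normal)

lemma abs_integral_std_normal_le:
  fixes \<phi> :: "real \<Rightarrow> real"
  shows "(\<And>x. \<bar>\<phi> x\<bar> \<le> B) \<Longrightarrow> \<bar>\<integral>u. \<phi> u \<partial>std_normal\<bar> \<le> B"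
  by (rule prob_space.abs_integral_le_const[OF prob_space_std_normal])

lemma abs_std_normal_clamp_diff_le:
  fixes \<phi> :: "real \<Rightarrow> real"
  assumes \<phi>: "L-lipschitz_on UNIV \<phi>" "\<And>x. \<bar>\<phi> x\<bar> \<le> B" and n: "0 < n"
  shows "\<bar>(\<integral>z. \<phi> (m + s * clamp (-n) n z) \<partial>std_normal) - (\<integral>z. \<phi> (m + s * z) \<partial>std_normal)\<bar>
    \<le> L * \<bar>s\<bar> / n"
  using prob_space.abs_integral_clamp_diff_le[OF prob_space_std_normal \<phi>, of "\<lambda>_. m" "\<lambda>_. s" "\<lambda>z. z"]
    integrable_std_normal_square n
  by (simp add: integral_std_normal_square)

lemma lipschitz_on_std_normal_integral_shift:
  fixes \<phi> :: "real \<Rightarrow> real"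
  assumes \<phi>: "L-lipschitz_on UNIV \<phi>" "\<And>x. \<bar>\<phi> x\<bar> \<le> B" and [measurable]: "k \<in> borel_measurable borel"
  shows "L-lipschitz_on UNIV (\<lambda>m. \<integral>u. \<phi> (m + k u) \<partial>std_normal)"
proof -
  interpret N: prob_space std_normal by (rule prob_space_std_normal)
  show ?thesis
  proof (rule N.lipschitz_on_integral)
    have [measurable]: "\<phi> \<in> borel_measurable borel" by (rule lipschitz_on_borel_measurable[OF \<phi>(1)])
    show "integrable std_normal (\<lambda>u. \<phi> (m + k u))" for m
      using \<phi>(2) by (intro N.integrable_const_bound[where B = B]) auto
    have "(L * (1 + 0))-lipschitz_on UNIV (\<lambda>m. \<phi> (m + k u))" for u
      by (rule lipschitz_on_compose2[OF lipschitz_on_add[OF lipschitz_on_id lipschitz_on_constant]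
            lipschitz_on_subset[OF \<phi>(1)]]) auto
    then show "L-lipschitz_on UNIV (\<lambda>m. \<phi> (m + k u))" for u by simp
  qed (rule lipschitz_on_nonneg[OF \<phi>(1)])
qed

lemma abs_std_normal_clamp_diff_le_iterated:
  fixes \<phi> :: "real \<Rightarrow> real"
  assumes \<phi>: "L-lipschitz_on UNIV \<phi>" "\<And>x. \<bar>\<phi> x\<bar> \<le> B" and n: "0 < n"
  shows "\<bar>(\<integral>z. \<integral>u. \<phi> (x * clamp (-n) n z + y * clamp (-n) n u) \<partial>std_normal \<partial>std_normal)
      - (\<integral>z. \<integral>u. \<phi> (x * z + y * u) \<partial>std_normal \<partial>std_normal)\<bar> \<le> L * (\<bar>x\<bar> + \<bar>y\<bar>) / n"
proof -
  interpret N: prob_space std_normal by (rule prob_space_std_normal)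
  have [measurable]: "\<phi> \<in> borel_measurable borel" by (rule lipschitz_on_borel_measurable[OF \<phi>(1)])
  define h where "h m = (\<integral>u. \<phi> (m + y * clamp (-n) n u) \<partial>std_normal)" for m
  define g where "g m = (\<integral>u. \<phi> (m + y * u) \<partial>std_normal)" for m
  have h: "L-lipschitz_on UNIV h" "\<And>m. \<bar>h m\<bar> \<le> B"
    unfolding h_def using \<phi> by (auto intro!: lipschitz_on_std_normal_integral_shift abs_integral_std_normal_le)
  have g: "L-lipschitz_on UNIV g" "\<And>m. \<bar>g m\<bar> \<le> B"
    unfolding g_def using \<phi> by (auto intro!: lipschitz_on_std_normal_integral_shift abs_integral_std_normal_le)
  have [measurable]: "h \<in> borel_measurable borel" "g \<in> borel_measurable borel"
    using lipschitz_on_borel_measurable h(1) g(1) by blast+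
  have "\<bar>(\<integral>z. h (x * clamp (-n) n z) \<partial>std_normal) - (\<integral>z. g (x * clamp (-n) n z) \<partial>std_normal)\<bar>
      \<le> (\<integral>z. L * \<bar>y\<bar> / n \<partial>std_normal)"
  proof (rule N.abs_integral_diff_le_integral)
    show "AE z in std_normal. \<bar>h (x * clamp (-n) n z) - g (x * clamp (-n) n z)\<bar> \<le> L * \<bar>y\<bar> / n"
      unfolding h_def g_def using abs_std_normal_clamp_diff_le[OF \<phi> n] by simp
  qed (use h(2) g(2) in \<open>auto intro!: N.integrable_const_bound[where B = B]\<close>)
  then have "\<bar>(\<integral>z. h (x * clamp (-n) n z) \<partial>std_normal) - (\<integral>z. g (0 + x * clamp (-n) n z) \<partial>std_normal)\<bar>
      \<le> L * \<bar>y\<bar> / n"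
    using N.prob_space by simp
  moreover have "\<bar>(\<integral>z. g (0 + x * clamp (-n) n z) \<partial>std_normal) - (\<integral>z. g (0 + x * z) \<partial>std_normal)\<bar>
      \<le> L * \<bar>x\<bar> / n"
    by (rule abs_std_normal_clamp_diff_le[OF g n])
  ultimately have "\<bar>(\<integral>z. h (x * clamp (-n) n z) \<partial>std_normal) - (\<integral>z. g (x * z) \<partial>std_normal)\<bar>
      \<le> L * \<bar>y\<bar> / n + L * \<bar>x\<bar> / n"
    by simp
  then show ?thesis
    unfolding h_def g_def by (simp add: add_divide_distrib distrib_left)
qed

lemma abs_SUP_std_normal_clamp_diff_le:
  fixes \<phi> :: "real \<Rightarrow> real"
  assumes L: "L-lipschitz_on UNIV \<phi>" and B: "\<And>x. \<bar>\<phi> x\<bar> \<le> B"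
    and ab: "0 \<le> a" "a \<le> b" and n: "0 < n"
  shows "\<bar>(SUP x\<in>{a..b}. \<integral>z. \<phi> (x * clamp (-n) n z) \<partial>std_normal)
    - (SUP x\<in>{a..b}. \<integral>z. \<phi> (x * z) \<partial>std_normal)\<bar> \<le> L * b / n"
proof (rule abs_SUP_diff_le[where B = B])
  fix x assume x: "x \<in> {a..b}"
  have "\<bar>(\<integral>z. \<phi> (x * clamp (-n) n z) \<partial>std_normal) - (\<integral>z. \<phi> (x * z) \<partial>std_normal)\<bar> \<le> L * \<bar>x\<bar> / n"
    using abs_std_normal_clamp_diff_le[OF L B n, of 0 x] by simp
  also have "\<dots> \<le> L * b / n"
    using x ab n lipschitz_on_nonneg[OF L] by (intro divide_right_mono mult_left_mono) auto
  finally show "\<bar>(\<integral>z. \<phi> (x * clamp (-n) n z) \<partial>std_normal) - (\<integral>z. \<phi> (x * z) \<partial>std_normal)\<bar>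
    \<le> L * b / n" .
qed (use ab B in \<open>auto intro!: abs_integral_std_normal_le\<close>)

lemma abs_SUP_SUP_std_normal_clamp_diff_le:
  fixes \<phi> :: "real \<Rightarrow> real"
  assumes L: "L-lipschitz_on UNIV \<phi>" and B: "\<And>x. \<bar>\<phi> x\<bar> \<le> B"
    and ab: "0 \<le> a" "a \<le> b" and n: "0 < n"
  shows "\<bar>(SUP x\<in>{a..b}. SUP y\<in>{a..b}.
        \<integral>z. \<integral>u. \<phi> (x * clamp (-n) n z + y * clamp (-n) n u) \<partial>std_normal \<partial>std_normal)
    - (SUP x\<in>{a..b}. SUP y\<in>{a..b}. \<integral>z. \<integral>u. \<phi> (x * z + y * u) \<partial>std_normal \<partial>std_normal)\<bar>
    \<le> 2 * L * b / n"
proof (intro abs_SUP_diff_le[where B = B] abs_SUP_le abs_integral_std_normal_le)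
  fix x y assume "x \<in> {a..b}" "y \<in> {a..b}"
  then have "L * (\<bar>x\<bar> + \<bar>y\<bar>) \<le> L * (2 * b)"
    using ab lipschitz_on_nonneg[OF L] by (intro mult_left_mono) auto
  then have "L * (\<bar>x\<bar> + \<bar>y\<bar>) / n \<le> 2 * L * b / n"
    using n by (simp add: divide_right_mono)
  then show "\<bar>(\<integral>z. \<integral>u. \<phi> (x * clamp (-n) n z + y * clamp (-n) n u) \<partial>std_normal \<partial>std_normal)
      - (\<integral>z. \<integral>u. \<phi> (x * z + y * u) \<partial>std_normal \<partial>std_normal)\<bar> \<le> 2 * L * b / n"
    using abs_std_normal_clamp_diff_le_iterated[OF L B n, of x y] by linarith
qed (use ab B in auto)

lemma (in pair_prob_space) distr_pair_snd: "distr (M1 \<Otimes>\<^sub>M M2) M2 snd = M2"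
proof (rule measure_eqI)
  fix A assume A: "A \<in> sets (distr (M1 \<Otimes>\<^sub>M M2) M2 snd)"
  then have "emeasure (distr (M1 \<Otimes>\<^sub>M M2) M2 snd) A = emeasure (M1 \<Otimes>\<^sub>M M2) (space M1 \<times> A)"
    by (auto simp: emeasure_distr space_pair_measure dest: sets.sets_into_space
        intro!: arg_cong2[where f = emeasure])
  also have "\<dots> = emeasure M2 A"
    using A by (simp add: M2.emeasure_pair_measure_Times M1.emeasure_space_1)
  finally show "emeasure (distr (M1 \<Otimes>\<^sub>M M2) M2 snd) A = emeasure M2 A" .
qed simp

lemma indep_var_fst_snd_std_normal:
  "prob_space.indep_var (std_normal \<Otimes>\<^sub>M std_normal) std_normal fst std_normal snd"
proof -
  interpret N: prob_space std_normal by (rule prob_space_std_normal)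
  interpret S: pair_prob_space std_normal std_normal ..
  show ?thesis
    unfolding S.indep_var_distribution_eq using S.distr_pair_snd N.distr_pair_fst[of std_normal] by simp
qed

lemma distributed_std_normal_density:
  assumes "distr M std_normal X = std_normal" "X \<in> measurable M borel"
  shows "distributed M lborel X std_normal_density"
proof -
  have "distr M lborel X = distr M std_normal X" by (rule distr_cong) simp_all
  then show ?thesis using assms unfolding distributed_def by (simp add: std_normal_def)
qed

lemma distributed_std_normal_scaled:
  assumes "0 < s"
  shows "distributed std_normal lborel (\<lambda>z. s * z) (normal_density 0 s)"
proof -
  interpret N: prob_space std_normal by (rule prob_space_std_normal)
  have "distributed std_normal lborel (\<lambda>z. z) std_normal_density"
    by (rule distributed_std_normal_density) simp_all
  then have "distributed std_normal lborel (\<lambda>z. 0 + s * z) (normal_density (0 + s * 0) (\<bar>s\<bar> * 1))"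
    using assms by (intro N.normal_density_affine) auto
  then show ?thesis using assms by simp
qed

lemma distributed_std_normal_linear_comb:
  assumes pos: "0 < x" "0 < y"
  shows "distributed (std_normal \<Otimes>\<^sub>M std_normal) lborel (\<lambda>p. x * fst p + y * snd p)
    (normal_density 0 (sqrt (x\<^sup>2 + y\<^sup>2)))"
proof -
  interpret N: prob_space std_normal by (rule prob_space_std_normal)
  interpret S: pair_prob_space std_normal std_normal ..
  have std: "distributed (std_normal \<Otimes>\<^sub>M std_normal) lborel fst std_normal_density"
    "distributed (std_normal \<Otimes>\<^sub>M std_normal) lborel snd std_normal_density"
    using S.distr_pair_snd N.distr_pair_fst by (auto intro!: distributed_std_normal_density)
  from std(1) have "distributed (std_normal \<Otimes>\<^sub>M std_normal) lborel (\<lambda>p. 0 + x * fst p)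
      (normal_density (0 + x * 0) (\<bar>x\<bar> * 1))"
    by (rule S.normal_density_affine) (use pos in auto)
  moreover from std(2) have "distributed (std_normal \<Otimes>\<^sub>M std_normal) lborel (\<lambda>p. 0 + y * snd p)
      (normal_density (0 + y * 0) (\<bar>y\<bar> * 1))"
    by (rule S.normal_density_affine) (use pos in auto)
  moreover have "S.indep_var borel (\<lambda>p. x * fst p) borel (\<lambda>p. y * snd p)"
    using S.indep_var_compose[OF indep_var_fst_snd_std_normal, of "\<lambda>z. x * z" borel "\<lambda>u. y * u" borel]
    by (simp add: o_def)
  ultimately show ?thesis using pos by (auto dest: S.add_indep_normal)
qed

lemma integral_std_normal_linear_comb:
  fixes \<phi> :: "real \<Rightarrow> real"
  assumes [measurable]: "\<phi> \<in> borel_measurable borel" and B: "\<And>x. \<bar>\<phi> x\<bar> \<le> B"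
    and xy: "0 \<le> x" "0 \<le> y"
  shows "(\<integral>z. \<integral>u. \<phi> (x * z + y * u) \<partial>std_normal \<partial>std_normal) = (\<integral>z. \<phi> (sqrt (x\<^sup>2 + y\<^sup>2) * z) \<partial>std_normal)"
proof (cases "x = 0 \<or> y = 0")
  case True
  interpret N: prob_space std_normal by (rule prob_space_std_normal)
  show ?thesis using True xy N.prob_space by auto
next
  case False
  then have pos: "0 < x" "0 < y" using xy by auto
  define \<sigma> where "\<sigma> = sqrt (x\<^sup>2 + y\<^sup>2)"
  have \<sigma>: "0 < \<sigma>" unfolding \<sigma>_def using pos by (intro real_sqrt_gt_zero add_pos_pos) auto
  interpret N: prob_space std_normal by (rule prob_space_std_normal)
  interpret S: pair_prob_space std_normal std_normal ..
  have "(\<integral>z. \<integral>u. \<phi> (x * z + y * u) \<partial>std_normal \<partial>std_normal)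
      = (\<integral>p. \<phi> (x * fst p + y * snd p) \<partial>(std_normal \<Otimes>\<^sub>M std_normal))"
    using S.integral_fst'[of "\<lambda>p. \<phi> (x * fst p + y * snd p)"] B
    by (simp add: S.P.integrable_const_bound[where B = B])
  also have "\<dots> = (\<integral>s. normal_density 0 \<sigma> s * \<phi> s \<partial>lborel)"
    unfolding \<sigma>_def
    by (rule distributed_integral[OF distributed_std_normal_linear_comb[OF pos], symmetric]) auto
  also have "\<dots> = (\<integral>z. \<phi> (\<sigma> * z) \<partial>std_normal)"
    by (rule distributed_integral[OF distributed_std_normal_scaled[OF \<sigma>]]) auto
  finally show ?thesis unfolding \<sigma>_def .
qed

lemma C_bLip_iff_lipschitz:
  "C_bLip f \<longleftrightarrow> bounded (range f) \<and> (\<exists>L. L-lipschitz_on UNIV f)"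
proof -
  have "(\<exists>L. \<forall>x y. \<bar>f x - f y\<bar> \<le> L * dist x y) \<longleftrightarrow> (\<exists>L. L-lipschitz_on UNIV f)"
  proof
    assume "\<exists>L. \<forall>x y. \<bar>f x - f y\<bar> \<le> L * dist x y"
    then obtain L where L: "\<And>x y. \<bar>f x - f y\<bar> \<le> L * dist x y" by blast
    have "\<bar>f x - f y\<bar> \<le> \<bar>L\<bar> * dist x y" for x y
      using L[of x y] by (meson abs_ge_self mult_right_mono order_trans zero_le_dist)
    then have "\<bar>L\<bar>-lipschitz_on UNIV f" by (intro lipschitz_onI) (auto simp: dist_real_def)
    then show "\<exists>L. L-lipschitz_on UNIV f" ..
  qed (auto simp: lipschitz_on_def dist_real_def)
  then show ?thesis unfolding C_bLip_def by simp
qed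

lemma C_bLipI: "bounded (range f) \<Longrightarrow> L-lipschitz_on UNIV f \<Longrightarrow> C_bLip f"
  unfolding C_bLip_iff_lipschitz by blast

lemma C_bLipE:
  assumes "C_bLip f"
  obtains B L where "\<And>x. \<bar>f x\<bar> \<le> B" "L-lipschitz_on UNIV f"
proof -
  from assms have "\<exists>B. \<forall>x. \<bar>f x\<bar> \<le> B" "\<exists>L. L-lipschitz_on UNIV f"
    unfolding C_bLip_iff_lipschitz bounded_real by auto
  then show ?thesis using that by blast
qed

lemma C_bLip_borel_measurable: "C_bLip f \<Longrightarrow> f \<in> borel_measurable borel"
  by (auto elim: C_bLipE intro: lipschitz_on_borel_measurable)

lemma C_bLip_imp_C_lLip:
  assumes "C_bLip f"
  shows "C_lLip f"
proof -
  obtain L where L: "L-lipschitz_on UNIV f" using assms by (auto elim: C_bLipE)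
  have "\<bar>f x - f y\<bar> \<le> L * (1 + norm x ^ 0 + norm y ^ 0) * norm (x - y)" for x y
  proof -
    have "\<bar>f x - f y\<bar> \<le> L * norm (x - y)"
      using lipschitz_on_normD[OF L] by simp
    also have "\<dots> \<le> L * 3 * norm (x - y)"
      using lipschitz_on_nonneg[OF L] by (simp add: mult_right_mono)
    finally show ?thesis by simp
  qed
  then show ?thesis unfolding C_lLip_def by blast
qed

lemma C_lLip_add_const: "C_lLip f \<Longrightarrow> C_lLip (\<lambda>x. f x + c)"
  unfolding C_lLip_def by simp

lemma C_lLip_square: "C_lLip (\<lambda>z::real. z\<^sup>2)"
proof -
  have "\<bar>x\<^sup>2 - y\<^sup>2\<bar> \<le> 1 * (1 + norm x ^ 1 + norm y ^ 1) * norm (x - y)" for x y :: real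
  proof -
    have "\<bar>x\<^sup>2 - y\<^sup>2\<bar> = \<bar>x + y\<bar> * \<bar>x - y\<bar>"
      by (simp add: power2_eq_square abs_mult[symmetric] algebra_simps)
    also have "\<dots> \<le> (1 + \<bar>x\<bar> + \<bar>y\<bar>) * \<bar>x - y\<bar>"
      by (intro mult_right_mono) auto
    finally show ?thesis by simp
  qed
  then show ?thesis unfolding C_lLip_def by blast
qed

lemma C_bLip_compose:
  assumes "C_bLip f" "K-lipschitz_on UNIV g"
  shows "C_bLip (\<lambda>x. f (g x))"
proof -
  obtain B L where "\<And>x. \<bar>f x\<bar> \<le> B" "L-lipschitz_on UNIV f"
    using C_bLipE[OF assms(1)] by metis
  then have "bounded (range (\<lambda>x. f (g x)))" "(L * K)-lipschitz_on UNIV (\<lambda>x. f (g x))"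
    using assms(2) by (auto simp: bounded_real intro: lipschitz_on_compose2 lipschitz_on_subset)
  then show ?thesis by (rule C_bLipI)
qed

lemma C_bLip_Pair_right: "C_bLip f \<Longrightarrow> C_bLip (\<lambda>y. f (x, y))"
  using C_bLip_compose[OF _ lipschitz_on_Pair_right] by blast

lemma C_bLip_integral:
  fixes f :: "'a::euclidean_space \<times> 'b::euclidean_space \<Rightarrow> real"
  assumes N: "prob_space N" "sets N = sets borel" and f: "C_bLip f"
  shows "C_bLip (\<lambda>x. \<integral>u. f (x, u) \<partial>N)"
proof -
  interpret N: prob_space N by (rule N(1))
  obtain B L where B: "\<And>p. \<bar>f p\<bar> \<le> B" and L: "L-lipschitz_on UNIV f"
    using C_bLipE[OF f] by metis
  have "(\<lambda>u. f (x, u)) \<in> borel_measurable borel" for x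
    using C_bLip_borel_measurable[OF C_bLip_Pair_right[OF f]] .
  then have meas: "(\<lambda>u. f (x, u)) \<in> borel_measurable N" for x
    using measurable_cong_sets[OF N(2) refl] by blast
  have "bounded (range (\<lambda>x. \<integral>u. f (x, u) \<partial>N))"
    using N.abs_integral_le_const[OF B] by (auto simp: bounded_real)
  moreover have "L-lipschitz_on UNIV (\<lambda>x. \<integral>u. f (x, u) \<partial>N)"
  proof (rule N.lipschitz_on_integral)
    have "(L * 1)-lipschitz_on UNIV (\<lambda>x. f (x, u))" for u
      by (rule lipschitz_on_compose2[OF lipschitz_on_Pair_left lipschitz_on_subset[OF L]]) auto
    then show "L-lipschitz_on UNIV (\<lambda>x. f (x, u))" for u by simp
    show "integrable N (\<lambda>u. f (x, u))" for x
      using meas B by (intro N.integrable_const_bound) auto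
  qed (use lipschitz_on_nonneg[OF L] in auto)
  ultimately show ?thesis by (rule C_bLipI)
qed

lemma C_bLip_SUP:
  fixes f :: "'a::euclidean_space \<times> 'b::euclidean_space \<Rightarrow> real"
  assumes A: "A \<noteq> {}" and f: "C_bLip f"
  shows "C_bLip (\<lambda>x. SUP y\<in>A. f (x, y))"
proof -
  obtain B L where B: "\<And>p. \<bar>f p\<bar> \<le> B" and L: "L-lipschitz_on UNIV f"
    using C_bLipE[OF f] by metis
  have "bounded (range (\<lambda>x. SUP y\<in>A. f (x, y)))"
    using abs_SUP_le[OF A B] by (auto simp: bounded_real)
  moreover have "L-lipschitz_on UNIV (\<lambda>x. SUP y\<in>A. f (x, y))"
  proof (rule lipschitz_onI)
    fix x x' :: 'a
    have "\<bar>f (x, y) - f (x', y)\<bar> \<le> L * dist x x'" for y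
      using lipschitz_onD[OF L, of "(x, y)" "(x', y)"] by (simp add: dist_real_def dist_Pair_Pair)
    then show "dist (SUP y\<in>A. f (x, y)) (SUP y\<in>A. f (x', y)) \<le> L * dist x x'"
      unfolding dist_real_def using B by (intro abs_SUP_diff_le[OF A]) auto
  qed (rule lipschitz_on_nonneg[OF L])
  ultimately show ?thesis by (rule C_bLipI)
qed

section \<open>Sublinear expectations\<close>

lemma sublin_space_prob_space: "sublin_space M P \<Longrightarrow> Q \<in> P \<Longrightarrow> prob_space Q"
  unfolding sublin_space_def by auto

lemma sublin_space_measurable:
  assumes "sublin_space M P" "Q \<in> P" "f \<in> borel_measurable M"
  shows "f \<in> borel_measurable Q"
proof -
  have "sets Q = sets M" using assms(1,2) unfolding sublin_space_def by auto
  then have "borel_measurable Q = borel_measurable M" by (rule measurable_cong_sets) simp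
  then show ?thesis using assms(3) by blast
qed

lemma sup_exp_cong_AE:
  assumes "sublin_space M P" "f \<in> borel_measurable M" "g \<in> borel_measurable M"
    and "\<And>Q. Q \<in> P \<Longrightarrow> AE w in Q. f w = g w"
  shows "sup_exp P f = sup_exp P g"
  unfolding sup_exp_def using assms sublin_space_measurable
  by (intro SUP_cong refl integral_cong_AE) auto

lemma abs_sup_exp_diff_le:
  fixes f g :: "'w \<Rightarrow> real"
  assumes P: "sublin_space M P" and meas: "f \<in> borel_measurable M" "g \<in> borel_measurable M"
    and bounds: "\<And>w. \<bar>f w\<bar> \<le> B" "\<And>w. \<bar>g w\<bar> \<le> B"
    and d: "\<And>Q. Q \<in> P \<Longrightarrow> \<bar>integral\<^sup>L Q f - integral\<^sup>L Q g\<bar> \<le> d"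
  shows "\<bar>sup_exp P f - sup_exp P g\<bar> \<le> d"
  unfolding sup_exp_def
proof (rule abs_SUP_diff_le[where B = B])
  show "P \<noteq> {}" using P by (simp add: sublin_space_def)
  fix Q assume Q: "Q \<in> P"
  interpret prob_space Q using sublin_space_prob_space[OF P Q] .
  show "\<bar>integral\<^sup>L Q f\<bar> \<le> B" "\<bar>integral\<^sup>L Q g\<bar> \<le> B"
    using bounds by (auto intro!: abs_integral_le_const)
  show "\<bar>integral\<^sup>L Q f - integral\<^sup>L Q g\<bar> \<le> d" by (rule d[OF Q])
qed

text \<open>The supremum of a set of reals that is not bounded above is an unspecified value;
  the shift identity excludes this case.\<close>
lemma integral_le_sup_exp_if_shift:
  assumes P: "sublin_space M P" and Q: "Q \<in> P"
    and int: "\<And>Q. Q \<in> P \<Longrightarrow> integrable Q f"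
    and shift: "sup_exp P (\<lambda>w. f w + 1) = sup_exp P f + 1"
  shows "integral\<^sup>L Q f \<le> sup_exp P f"
proof -
  have integral_shift: "integral\<^sup>L Q (\<lambda>w. f w + 1) = integral\<^sup>L Q f + 1" if "Q \<in> P" for Q
  proof -
    interpret prob_space Q using sublin_space_prob_space[OF P that] .
    show ?thesis using int[OF that] by (simp add: prob_space)
  qed
  have "bdd_above ((\<lambda>Q. integral\<^sup>L Q f) ` P)"
  proof (rule ccontr)
    assume unbounded: "\<not> bdd_above ((\<lambda>Q. integral\<^sup>L Q f) ` P)"
    have "\<not> bdd_above ((\<lambda>Q. integral\<^sup>L Q (\<lambda>w. f w + 1)) ` P)"
    proof
      assume "bdd_above ((\<lambda>Q. integral\<^sup>L Q (\<lambda>w. f w + 1)) ` P)"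
      then obtain K where "\<And>Q. Q \<in> P \<Longrightarrow> integral\<^sup>L Q f + 1 \<le> K"
        by (auto simp: bdd_above_def integral_shift)
      then have "bdd_above ((\<lambda>Q. integral\<^sup>L Q f) ` P)"
        by (intro bdd_aboveI[where M = "K - 1"]) force
      with unbounded show False ..
    qed
    then have "sup_exp P (\<lambda>w. f w + 1) = sup_exp P f"
      unfolding sup_exp_def using unbounded by (rule Sup_eq_if_not_bdd_above)
    then show False using shift by simp
  qed
  then show ?thesis unfolding sup_exp_def by (rule cSUP_upper[OF Q])
qed

lemma maximal_distr_sup_exp:
  "maximal_distr P V a b \<Longrightarrow> C_bLip \<psi> \<Longrightarrow> sup_exp P (\<lambda>w. \<psi> (V w)) = (SUP v\<in>{a..b}. \<psi> v)"
  unfolding maximal_distr_def by (blast dest: C_bLip_imp_C_lLip)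

lemma std_normal_distr_sup_exp:
  "std_normal_distr P e \<Longrightarrow> C_bLip \<psi> \<Longrightarrow> sup_exp P (\<lambda>w. \<psi> (e w)) = integral\<^sup>L std_normal \<psi>"
  unfolding std_normal_distr_def
  by (simp add: C_bLip_imp_C_lLip integral_std_normal C_bLip_borel_measurable)

lemma seq_indep_maximal_sup_exp:
  assumes "seq_indep P X V" "maximal_distr P V a b" "C_bLip f"
  shows "sup_exp P (\<lambda>w. f (X w, V w)) = sup_exp P (\<lambda>w. SUP v\<in>{a..b}. f (X w, v))"
  using assms maximal_distr_sup_exp[OF assms(2) C_bLip_Pair_right[OF assms(3)]]
  unfolding seq_indep_def by simp

lemma seq_indep_std_normal_sup_exp:
  assumes "seq_indep P X e" "std_normal_distr P e" "C_bLip f"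
  shows "sup_exp P (\<lambda>w. f (X w, e w)) = sup_exp P (\<lambda>w. \<integral>u. f (X w, u) \<partial>std_normal)"
  using assms std_normal_distr_sup_exp[OF assms(2) C_bLip_Pair_right[OF assms(3)]]
  unfolding seq_indep_def by simp

lemma maximal_distr_AE_in_interval:
  assumes P: "sublin_space M P" and V: "maximal_distr P V a b" and "a \<le> b" and Q: "Q \<in> P"
  shows "AE w in Q. V w \<in> {a..b}"
proof -
  define \<psi> where "\<psi> v = max 0 (a - v) + max 0 (v - b)" for v :: real
  have lLip: "C_lLip \<psi>"
  proof -
    have "\<bar>\<psi> x - \<psi> y\<bar> \<le> 1 * (1 + norm x ^ 0 + norm y ^ 0) * norm (x - y)" for x y
      by (simp add: \<psi>_def max_def abs_if)
    then show ?thesis unfolding C_lLip_def by blast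
  qed
  have SUP_shift: "(SUP v\<in>{a..b}. \<psi> v + c) = c" for c
  proof -
    have "(SUP v\<in>{a..b}. \<psi> v + c) = (SUP v\<in>{a..b}. c)" by (rule SUP_cong) (auto simp: \<psi>_def)
    then show ?thesis using \<open>a \<le> b\<close> by simp
  qed
  have int: "\<And>Q. Q \<in> P \<Longrightarrow> integrable Q (\<lambda>w. \<psi> (V w))"
    and "sup_exp P (\<lambda>w. \<psi> (V w) + 0) = (SUP v\<in>{a..b}. \<psi> v + 0)"
    using V lLip unfolding maximal_distr_def by auto
  then have sup0: "sup_exp P (\<lambda>w. \<psi> (V w)) = 0" using SUP_shift[of 0] by simp
  have "sup_exp P (\<lambda>w. \<psi> (V w) + 1) = (SUP v\<in>{a..b}. \<psi> v + 1)"
    using V C_lLip_add_const[OF lLip] unfolding maximal_distr_def by blast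
  then have "sup_exp P (\<lambda>w. \<psi> (V w) + 1) = 1" using SUP_shift[of 1] by simp
  then have "integral\<^sup>L Q (\<lambda>w. \<psi> (V w)) \<le> 0"
    using integral_le_sup_exp_if_shift[OF P Q int] sup0 by simp
  moreover have nonneg: "0 \<le> \<psi> v" for v by (simp add: \<psi>_def)
  ultimately have "integral\<^sup>L Q (\<lambda>w. \<psi> (V w)) = 0"
    by (simp add: order_antisym)
  then have "AE w in Q. \<psi> (V w) = 0"
    using integral_nonneg_eq_0_iff_AE[OF int[OF Q]] nonneg by simp
  then show ?thesis
    by (rule eventually_mono) (auto simp: \<psi>_def max_def split: if_splits)
qed

lemma std_normal_distr_second_moment:
  assumes P: "sublin_space M P" and e: "std_normal_distr P e" and Q: "Q \<in> P"
  shows "integrable Q (\<lambda>w. (e w)\<^sup>2)" "integral\<^sup>L Q (\<lambda>w. (e w)\<^sup>2) \<le> 1"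
proof -
  interpret N: prob_space std_normal by (rule prob_space_std_normal)
  have int: "\<And>Q. Q \<in> P \<Longrightarrow> integrable Q (\<lambda>w. (e w)\<^sup>2)"
    and "sup_exp P (\<lambda>w. (e w)\<^sup>2) = (\<integral>z. std_normal_density z * z\<^sup>2 \<partial>lborel)"
    using e C_lLip_square unfolding std_normal_distr_def by auto
  then have sup1: "sup_exp P (\<lambda>w. (e w)\<^sup>2) = 1"
    by (simp add: integral_std_normal[symmetric] integral_std_normal_square)
  have "sup_exp P (\<lambda>w. (e w)\<^sup>2 + 1) = (\<integral>z. std_normal_density z * (z\<^sup>2 + 1) \<partial>lborel)"
    using e C_lLip_add_const[OF C_lLip_square] unfolding std_normal_distr_def by blast
  also have "\<dots> = integral\<^sup>L std_normal (\<lambda>z. z\<^sup>2) + 1"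
    using N.prob_space
    by (simp add: integral_std_normal[symmetric] integrable_std_normal_square)
  finally have "sup_exp P (\<lambda>w. (e w)\<^sup>2 + 1) = sup_exp P (\<lambda>w. (e w)\<^sup>2) + 1"
    by (simp add: sup1 integral_std_normal_square)
  then show "integral\<^sup>L Q (\<lambda>w. (e w)\<^sup>2) \<le> 1"
    using integral_le_sup_exp_if_shift[OF P Q int] sup1 by simp
  show "integrable Q (\<lambda>w. (e w)\<^sup>2)" by (rule int[OF Q])
qed

lemma abs_sup_exp_clamp_diff_le:
  fixes \<phi> :: "real \<Rightarrow> real"
  assumes P: "sublin_space M P" and e: "std_normal_distr P e"
    and \<phi>: "L-lipschitz_on UNIV \<phi>" "\<And>x. \<bar>\<phi> x\<bar> \<le> B"
    and meas [measurable]: "f \<in> borel_measurable M" "c \<in> borel_measurable M" "e \<in> borel_measurable M"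
    and c: "\<And>w. \<bar>c w\<bar> \<le> C" and n: "0 < n"
  shows "\<bar>sup_exp P (\<lambda>w. \<phi> (f w + c w * clamp (-n) n (e w))) - sup_exp P (\<lambda>w. \<phi> (f w + c w * e w))\<bar>
    \<le> L * C / n"
proof (rule abs_sup_exp_diff_le[OF P _ _ \<phi>(2) \<phi>(2)])
  have [measurable]: "\<phi> \<in> borel_measurable borel" by (rule lipschitz_on_borel_measurable[OF \<phi>(1)])
  show "(\<lambda>w. \<phi> (f w + c w * clamp (-n) n (e w))) \<in> borel_measurable M"
    "(\<lambda>w. \<phi> (f w + c w * e w)) \<in> borel_measurable M" by measurable
  fix Q assume Q: "Q \<in> P"
  interpret Q: prob_space Q by (rule sublin_space_prob_space[OF P Q])
  have "\<bar>(\<integral>w. \<phi> (f w + c w * clamp (-n) n (e w)) \<partial>Q) - (\<integral>w. \<phi> (f w + c w * e w) \<partial>Q)\<bar>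
      \<le> L * C / n * (\<integral>w. (e w)\<^sup>2 \<partial>Q)"
    using meas[THEN sublin_space_measurable[OF P Q]] std_normal_distr_second_moment(1)[OF P e Q]
    by (intro Q.abs_integral_clamp_diff_le[OF \<phi> _ _ _ c _ n])
  also have "\<dots> \<le> L * C / n"
    using std_normal_distr_second_moment(2)[OF P e Q] lipschitz_on_nonneg[OF \<phi>(1)] n
      abs_ge_zero[of "c undefined"] c[of undefined]
    by (intro mult_left_le) auto
  finally show "\<bar>(\<integral>w. \<phi> (f w + c w * clamp (-n) n (e w)) \<partial>Q) - (\<integral>w. \<phi> (f w + c w * e w) \<partial>Q)\<bar>
      \<le> L * C / n" .
qed

lemma abs_sup_exp_clamp_sum_diff_le:
  fixes \<phi> :: "real \<Rightarrow> real"
  assumes P: "sublin_space M P" and e: "std_normal_distr P e" and eb: "std_normal_distr P eb"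
    and L: "L-lipschitz_on UNIV \<phi>" and B: "\<And>x. \<bar>\<phi> x\<bar> \<le> B"
    and [measurable]: "X \<in> borel_measurable M" "Y \<in> borel_measurable M"
      "e \<in> borel_measurable M" "eb \<in> borel_measurable M"
    and XY: "\<And>w. \<bar>X w\<bar> \<le> C" "\<And>w. \<bar>Y w\<bar> \<le> C" and n: "0 < n"
  shows "\<bar>sup_exp P (\<lambda>w. \<phi> (X w * clamp (-n) n (e w) + Y w * clamp (-n) n (eb w)))
    - sup_exp P (\<lambda>w. \<phi> (X w * e w + Y w * eb w))\<bar> \<le> 2 * L * C / n"
proof -
  have "\<bar>sup_exp P (\<lambda>w. \<phi> (X w * clamp (-n) n (e w) + Y w * clamp (-n) n (eb w)))
      - sup_exp P (\<lambda>w. \<phi> (X w * e w + Y w * clamp (-n) n (eb w)))\<bar> \<le> L * C / n"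
    using abs_sup_exp_clamp_diff_le[OF P e L B, where f = "\<lambda>w. Y w * clamp (-n) n (eb w)"
        and c = X and C = C and n = n] XY n
    by (simp add: add.commute)
  moreover have "\<bar>sup_exp P (\<lambda>w. \<phi> (X w * e w + Y w * clamp (-n) n (eb w)))
      - sup_exp P (\<lambda>w. \<phi> (X w * e w + Y w * eb w))\<bar> \<le> L * C / n"
    by (rule abs_sup_exp_clamp_diff_le[OF P eb L B, where c = Y]) (simp_all add: XY n)
  ultimately have "\<bar>sup_exp P (\<lambda>w. \<phi> (X w * clamp (-n) n (e w) + Y w * clamp (-n) n (eb w)))
      - sup_exp P (\<lambda>w. \<phi> (X w * e w + Y w * eb w))\<bar> \<le> L * C / n + L * C / n"
    by (simp only: abs_le_iff) linarith
  then show ?thesis by (simp add: field_simps)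
qed

section \<open>Semi-G-normal distributions\<close>

lemma sup_exp_clamped_semi_G_normal:
  fixes \<phi> :: "real \<Rightarrow> real"
  assumes ab: "0 \<le> a" "a \<le> b" and n: "0 \<le> n" and \<phi>: "C_bLip \<phi>"
    and V: "maximal_distr P V a b" and e: "std_normal_distr P e" and Ve: "seq_indep P V e"
  shows "sup_exp P (\<lambda>w. \<phi> (clamp a b (V w) * clamp (-n) n (e w)))
    = (SUP x\<in>{a..b}. \<integral>z. \<phi> (x * clamp (-n) n z) \<partial>std_normal)"
proof -
  define \<Phi> where "\<Phi> p = \<phi> (clamp a b (fst p) * clamp (-n) n (snd p))" for p :: "real \<times> real"
  have "\<exists>K. K-lipschitz_on UNIV (\<lambda>p::real \<times> real. clamp a b (fst p) * clamp (-n) n (snd p))"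
    by (rule exI, (rule lipschitz_on_mult_bounded lipschitz_on_clamp_comp lipschitz_on_fst_comp
          lipschitz_on_snd_comp lipschitz_on_id abs_clamp_le[OF ab] abs_clamp_sym_le[OF n])+)
  then have \<Phi>: "C_bLip \<Phi>" unfolding \<Phi>_def using C_bLip_compose[OF \<phi>] by blast
  have "sup_exp P (\<lambda>w. \<Phi> (V w, e w)) = sup_exp P (\<lambda>w. \<integral>z. \<Phi> (V w, z) \<partial>std_normal)"
    by (rule seq_indep_std_normal_sup_exp[OF Ve e \<Phi>])
  also have "\<dots> = (SUP x\<in>{a..b}. \<integral>z. \<Phi> (x, z) \<partial>std_normal)"
    by (rule maximal_distr_sup_exp[OF V C_bLip_integral[OF prob_space_std_normal sets_std_normal \<Phi>]])
  also have "\<dots> = (SUP x\<in>{a..b}. \<integral>z. \<phi> (x * clamp (-n) n z) \<partial>std_normal)"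
    unfolding \<Phi>_def by (intro SUP_cong) (auto simp: clamp_eq_self)
  finally show ?thesis unfolding \<Phi>_def by simp
qed

lemma sup_exp_clamped_semi_G_normal_sum:
  fixes \<phi> :: "real \<Rightarrow> real"
  assumes ab: "0 \<le> a" "a \<le> b" and n: "0 \<le> n" and \<phi>: "C_bLip \<phi>"
    and V: "maximal_distr P V a b" and Vb: "maximal_distr P Vb a b"
    and e: "std_normal_distr P e" and eb: "std_normal_distr P eb"
    and chain1: "seq_indep P V Vb" and chain2: "seq_indep P (\<lambda>w. (V w, Vb w)) e"
    and chain3: "seq_indep P (\<lambda>w. (V w, Vb w, e w)) eb"
  shows "sup_exp P (\<lambda>w. \<phi> (clamp a b (V w) * clamp (-n) n (e w) + clamp a b (Vb w) * clamp (-n) n (eb w)))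
    = (SUP x\<in>{a..b}. SUP y\<in>{a..b}.
        \<integral>z. \<integral>u. \<phi> (x * clamp (-n) n z + y * clamp (-n) n u) \<partial>std_normal \<partial>std_normal)"
proof -
  define \<Phi>3 where "\<Phi>3 p = \<phi> (clamp a b (fst (fst p)) * clamp (-n) n (snd (snd (fst p)))
      + clamp a b (fst (snd (fst p))) * clamp (-n) n (snd p))" for p :: "(real \<times> real \<times> real) \<times> real"
  define \<Phi>2 where "\<Phi>2 p = (\<integral>u. \<Phi>3 ((fst (fst p), snd (fst p), snd p), u) \<partial>std_normal)"
    for p :: "(real \<times> real) \<times> real"
  define \<Phi>1 where "\<Phi>1 p = (\<integral>z. \<Phi>2 (p, z) \<partial>std_normal)" for p :: "real \<times> real"
  have "\<exists>K. K-lipschitz_on UNIV (\<lambda>p::(real \<times> real \<times> real) \<times> real.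
      clamp a b (fst (fst p)) * clamp (-n) n (snd (snd (fst p)))
      + clamp a b (fst (snd (fst p))) * clamp (-n) n (snd p))"
    by (rule exI, (rule lipschitz_on_add lipschitz_on_mult_bounded lipschitz_on_clamp_comp
          lipschitz_on_fst_comp lipschitz_on_snd_comp lipschitz_on_id abs_clamp_le[OF ab]
          abs_clamp_sym_le[OF n])+)
  then have \<Phi>3: "C_bLip \<Phi>3" unfolding \<Phi>3_def using C_bLip_compose[OF \<phi>] by blast
  have "\<exists>K. K-lipschitz_on UNIV (\<lambda>p::(real \<times> real) \<times> real. (fst (fst p), snd (fst p), snd p))"
    by (rule exI, (rule lipschitz_on_Pair lipschitz_on_fst_comp lipschitz_on_snd_comp lipschitz_on_id)+)
  then have \<Phi>2: "C_bLip \<Phi>2"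
    unfolding \<Phi>2_def
    using C_bLip_compose[OF C_bLip_integral[OF prob_space_std_normal sets_std_normal \<Phi>3]] by blast
  have \<Phi>1: "C_bLip \<Phi>1"
    unfolding \<Phi>1_def by (rule C_bLip_integral[OF prob_space_std_normal sets_std_normal \<Phi>2])
  have "sup_exp P (\<lambda>w. \<Phi>3 ((V w, Vb w, e w), eb w)) = sup_exp P (\<lambda>w. \<Phi>2 ((V w, Vb w), e w))"
    using seq_indep_std_normal_sup_exp[OF chain3 eb \<Phi>3] by (simp add: \<Phi>2_def)
  also have "\<dots> = sup_exp P (\<lambda>w. \<Phi>1 (V w, Vb w))"
    using seq_indep_std_normal_sup_exp[OF chain2 e \<Phi>2] by (simp add: \<Phi>1_def)
  also have "\<dots> = sup_exp P (\<lambda>w. SUP y\<in>{a..b}. \<Phi>1 (V w, y))"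
    by (rule seq_indep_maximal_sup_exp[OF chain1 Vb \<Phi>1])
  also have "\<dots> = (SUP x\<in>{a..b}. SUP y\<in>{a..b}. \<Phi>1 (x, y))"
    using ab by (intro maximal_distr_sup_exp[OF V C_bLip_SUP[OF _ \<Phi>1]]) simp
  also have "\<dots> = (SUP x\<in>{a..b}. SUP y\<in>{a..b}.
      \<integral>z. \<integral>u. \<phi> (x * clamp (-n) n z + y * clamp (-n) n u) \<partial>std_normal \<partial>std_normal)"
    unfolding \<Phi>1_def \<Phi>2_def \<Phi>3_def by (intro SUP_cong) (auto simp: clamp_eq_self)
  finally show ?thesis unfolding \<Phi>3_def by simp
qed

lemma sup_exp_semi_G_normal:
  fixes \<phi> :: "real \<Rightarrow> real"
  assumes P: "sublin_space M P" and meas [measurable]: "V \<in> borel_measurable M" "e \<in> borel_measurable M"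
    and ab: "0 \<le> a" "a \<le> b" and \<phi>: "C_bLip \<phi>"
    and V: "maximal_distr P V a b" and e: "std_normal_distr P e" and Ve: "seq_indep P V e"
  shows "sup_exp P (\<lambda>w. \<phi> (V w * e w)) = (SUP x\<in>{a..b}. \<integral>z. \<phi> (x * z) \<partial>std_normal)"
proof -
  obtain B L where B: "\<And>x. \<bar>\<phi> x\<bar> \<le> B" and L: "L-lipschitz_on UNIV \<phi>"
    using C_bLipE[OF \<phi>] by metis
  have [measurable]: "\<phi> \<in> borel_measurable borel" by (rule C_bLip_borel_measurable[OF \<phi>])
  have clamped: "sup_exp P (\<lambda>w. \<phi> (V w * e w)) = sup_exp P (\<lambda>w. \<phi> (0 + clamp a b (V w) * e w))"
  proof (rule sup_exp_cong_AE[OF P])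
    fix Q assume "Q \<in> P"
    from maximal_distr_AE_in_interval[OF P V ab(2) this]
    show "AE w in Q. \<phi> (V w * e w) = \<phi> (0 + clamp a b (V w) * e w)"
      by eventually_elim (simp add: clamp_eq_self)
  qed simp_all
  show ?thesis
  proof (rule eq_if_abs_diff_le_divide)
    fix n :: real assume n: "0 < n"
    have "\<bar>sup_exp P (\<lambda>w. \<phi> (0 + clamp a b (V w) * clamp (-n) n (e w)))
        - sup_exp P (\<lambda>w. \<phi> (0 + clamp a b (V w) * e w))\<bar> \<le> L * b / n"
      using ab by (intro abs_sup_exp_clamp_diff_le[OF P e L B _ _ _ _ n] abs_clamp_le) auto
    moreover have "sup_exp P (\<lambda>w. \<phi> (0 + clamp a b (V w) * clamp (-n) n (e w)))
        = (SUP x\<in>{a..b}. \<integral>z. \<phi> (x * clamp (-n) n z) \<partial>std_normal)"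
      using sup_exp_clamped_semi_G_normal[OF ab _ \<phi> V e Ve] n by simp
    ultimately show "\<bar>sup_exp P (\<lambda>w. \<phi> (V w * e w)) - (SUP x\<in>{a..b}. \<integral>z. \<phi> (x * z) \<partial>std_normal)\<bar>
        \<le> 2 * L * b / n"
      using clamped abs_SUP_std_normal_clamp_diff_le[OF L B ab n] by (simp add: abs_le_iff)
  qed
qed

lemma sup_exp_semi_G_normal_sum:
  fixes \<phi> :: "real \<Rightarrow> real"
  assumes P: "sublin_space M P"
    and meas [measurable]: "V \<in> borel_measurable M" "Vb \<in> borel_measurable M"
      "e \<in> borel_measurable M" "eb \<in> borel_measurable M"
    and ab: "0 \<le> a" "a \<le> b" and \<phi>: "C_bLip \<phi>"
    and V: "maximal_distr P V a b" and Vb: "maximal_distr P Vb a b"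
    and e: "std_normal_distr P e" and eb: "std_normal_distr P eb"
    and chain1: "seq_indep P V Vb" and chain2: "seq_indep P (\<lambda>w. (V w, Vb w)) e"
    and chain3: "seq_indep P (\<lambda>w. (V w, Vb w, e w)) eb"
  shows "sup_exp P (\<lambda>w. \<phi> (V w * e w + Vb w * eb w))
    = (SUP x\<in>{a..b}. SUP y\<in>{a..b}. \<integral>z. \<integral>u. \<phi> (x * z + y * u) \<partial>std_normal \<partial>std_normal)"
proof -
  obtain B L where B: "\<And>x. \<bar>\<phi> x\<bar> \<le> B" and L: "L-lipschitz_on UNIV \<phi>"
    using C_bLipE[OF \<phi>] by metis
  have [measurable]: "\<phi> \<in> borel_measurable borel" by (rule C_bLip_borel_measurable[OF \<phi>])
  have clamped: "sup_exp P (\<lambda>w. \<phi> (V w * e w + Vb w * eb w))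
      = sup_exp P (\<lambda>w. \<phi> (clamp a b (V w) * e w + clamp a b (Vb w) * eb w))"
  proof (rule sup_exp_cong_AE[OF P])
    fix Q assume Q: "Q \<in> P"
    from maximal_distr_AE_in_interval[OF P V ab(2) Q] maximal_distr_AE_in_interval[OF P Vb ab(2) Q]
    show "AE w in Q. \<phi> (V w * e w + Vb w * eb w) = \<phi> (clamp a b (V w) * e w + clamp a b (Vb w) * eb w)"
      by eventually_elim (simp add: clamp_eq_self)
  qed simp_all
  show ?thesis
  proof (rule eq_if_abs_diff_le_divide)
    fix n :: real assume n: "0 < n"
    have "\<bar>sup_exp P (\<lambda>w. \<phi> (clamp a b (V w) * clamp (-n) n (e w) + clamp a b (Vb w) * clamp (-n) n (eb w)))
        - sup_exp P (\<lambda>w. \<phi> (clamp a b (V w) * e w + clamp a b (Vb w) * eb w))\<bar> \<le> 2 * L * b / n"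
      using ab by (intro abs_sup_exp_clamp_sum_diff_le[OF P e eb L B _ _ _ _ _ _ n] abs_clamp_le) auto
    moreover have "sup_exp P (\<lambda>w. \<phi> (clamp a b (V w) * clamp (-n) n (e w) + clamp a b (Vb w) * clamp (-n) n (eb w)))
        = (SUP x\<in>{a..b}. SUP y\<in>{a..b}.
            \<integral>z. \<integral>u. \<phi> (x * clamp (-n) n z + y * clamp (-n) n u) \<partial>std_normal \<partial>std_normal)"
      using n by (intro sup_exp_clamped_semi_G_normal_sum[OF ab _ \<phi> V Vb e eb chain1 chain2 chain3]) simp
    ultimately show "\<bar>sup_exp P (\<lambda>w. \<phi> (V w * e w + Vb w * eb w))
        - (SUP x\<in>{a..b}. SUP y\<in>{a..b}. \<integral>z. \<integral>u. \<phi> (x * z + y * u) \<partial>std_normal \<partial>std_normal)\<bar>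
        \<le> 4 * L * b / n"
      using clamped abs_SUP_SUP_std_normal_clamp_diff_le[OF L B ab n] by (simp add: abs_le_iff)
  qed
qed

theorem mainTheorem10:
  fixes M :: "'w measure" and P :: "'w measure set"
    and V Vb e eb W Wb :: "'w \<Rightarrow> real" and sl su :: real
  assumes space: "sublin_space M P"
    and meas: "V \<in> borel_measurable M" "Vb \<in> borel_measurable M"
              "e \<in> borel_measurable M" "eb \<in> borel_measurable M"
    and sig: "0 \<le> sl" "sl \<le> su"
    and W_def: "\<And>w. W w = V w * e w"
    and V_max: "maximal_distr P V sl su"
    and e_norm: "std_normal_distr P e"
    and V_e: "seq_indep P V e"
    and Wb_def: "\<And>w. Wb w = Vb w * eb w"
    and Vb_max: "maximal_distr P Vb sl su"
    and eb_norm: "std_normal_distr P eb"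
    and Vb_eb: "seq_indep P Vb eb"
    and Wb_W: "same_distr P Wb W"
    and chain1: "seq_indep P V Vb"
    and chain2: "seq_indep P (\<lambda>w. (V w, Vb w)) e"
    and chain3: "seq_indep P (\<lambda>w. (V w, Vb w, e w)) eb"
  shows "same_distr P (\<lambda>w. W w + Wb w) (\<lambda>w. sqrt 2 * W w)"
  unfolding same_distr_def
proof (intro allI impI)
  fix \<phi> :: "real \<Rightarrow> real"
  assume \<phi>: "C_bLip \<phi>"
  obtain B where B: "\<And>x. \<bar>\<phi> x\<bar> \<le> B" using C_bLipE[OF \<phi>] by metis
  have [measurable]: "\<phi> \<in> borel_measurable borel" by (rule C_bLip_borel_measurable[OF \<phi>])
  have \<phi>_sqrt2: "C_bLip (\<lambda>x. \<phi> (sqrt 2 * x))"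
    using C_bLip_compose[OF \<phi> lipschitz_on_cmult_real[OF lipschitz_on_id]] .
  have "sup_exp P (\<lambda>w. \<phi> (W w + Wb w))
      = (SUP x\<in>{sl..su}. SUP y\<in>{sl..su}. \<integral>z. \<integral>u. \<phi> (x * z + y * u) \<partial>std_normal \<partial>std_normal)"
    unfolding W_def Wb_def
    by (rule sup_exp_semi_G_normal_sum[OF space meas sig \<phi> V_max Vb_max e_norm eb_norm chain1 chain2 chain3])
  also have "\<dots> = (SUP x\<in>{sl..su}. SUP y\<in>{sl..su}. \<integral>z. \<phi> (sqrt (x\<^sup>2 + y\<^sup>2) * z) \<partial>std_normal)"
    using sig by (intro SUP_cong refl integral_std_normal_linear_comb[OF _ B]) auto
  also have "\<dots> = (SUP x\<in>{sl..su}. \<integral>z. \<phi> (sqrt 2 * x * z) \<partial>std_normal)"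
    by (rule SUP_SUP_sqrt_sum_squares[OF sig abs_integral_std_normal_le[OF B]])
  also have "\<dots> = sup_exp P (\<lambda>w. \<phi> (sqrt 2 * W w))"
    unfolding W_def using sup_exp_semi_G_normal[OF space meas(1,3) sig \<phi>_sqrt2 V_max e_norm V_e]
    by (simp add: mult.assoc)
  finally show "sup_exp P (\<lambda>w. \<phi> (W w + Wb w)) = sup_exp P (\<lambda>w. \<phi> (sqrt 2 * W w))" .
qed

end
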